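(* Fix $\epsilon>0$ and define \[U_1:=\left\{(a,b)\in\bigl([0,1/2)\times[1/2,1)\bigr)\cup\bigl([1/2,1)\times[0,1/2)\bigr):\ a+b<\tfrac34\right\},\] \[U_2:=\left\{(a,b)\in[0,1/2)\times[0,1):\ \tfrac34+\epsilon<a+b<\tfrac54\right\},\] $U:=U_1\cup U_2$ and $S_\epsilon:=\pi(U)\subset\mathbb{T}^2$. Let $\theta_x,\theta_y,\theta_z\in S_\epsilon$ satisfy $2\theta_y=\theta_x+\theta_z$, and write $d:=\frac{\pi^{-1}(\theta_z)-\pi^{-1}(\theta_x)}{2}\in\mathbb{R}^2$. Then \[2\psi(\theta_y)\ge\psi(\theta_x)+\psi(\theta_z)+1/2\quad\text{or}\quad \psi(\theta_y)=\psi(\theta_x)+(d_1+d_2).\]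
   Context: $\mathbb{T}^2:=(\mathbb{R}/\mathbb{Z})^2$. $\pi:\mathbb{R}^2\to\mathbb{T}^2$, $x\mapsto x+\mathbb{Z}^2$, and for $\theta\in\mathbb{T}^2$, $\pi^{-1}(\theta)$ denotes the unique $x\in[0,1)^2$ with $\pi(x)=\theta$. The sum map $\psi:\mathbb{T}^2\to[0,2)$ is $\psi(\theta)=\pi^{-1}(\theta)_1+\pi^{-1}(\theta)_2$. *)

theory Defs
  imports "HOL-Analysis.Analysis"
begin

definition unit_sq :: "(real \<times> real) set" where
  "unit_sq = {p. 0 \<le> fst p \<and> fst p < 1 \<and> 0 \<le> snd p \<and> snd p < 1}"

text \<open>The torus T^2 = R^2 / Z^2, modelled by its canonical representatives.\<close>
typedef torus = unit_sq
  by (rule exI[of _ "(0,0)"]) (simp add: unit_sq_def)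

definition tpi :: "real \<times> real \<Rightarrow> torus" where
  "tpi x = Abs_torus (frac (fst x), frac (snd x))"

definition tpi_inv :: "torus \<Rightarrow> real \<times> real" where
  "tpi_inv \<theta> = (THE x. x \<in> unit_sq \<and> tpi x = \<theta>)"

instantiation torus :: plus
begin
definition plus_torus :: "torus \<Rightarrow> torus \<Rightarrow> torus" where
  "plus_torus \<theta> \<eta> = tpi (tpi_inv \<theta> + tpi_inv \<eta>)"
instance ..
end

definition psi :: "torus \<Rightarrow> real" where
  "psi \<theta> = fst (tpi_inv \<theta>) + snd (tpi_inv \<theta>)"

definition U1 :: "(real \<times> real) set" where
  "U1 = {(a,b). ((0 \<le> a \<and> a < 1/2 \<and> 1/2 \<le> b \<and> b < 1) \<or> (1/2 \<le> a \<and> a < 1 \<and> 0 \<le> b \<and> b < 1/2))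
               \<and> a + b < 3/4}"

definition U2 :: "real \<Rightarrow> (real \<times> real) set" where
  "U2 \<epsilon> = {(a,b). 0 \<le> a \<and> a < 1/2 \<and> 0 \<le> b \<and> b < 1 \<and> 3/4 + \<epsilon> < a + b \<and> a + b < 5/4}"

definition S_eps :: "real \<Rightarrow> torus set" where
  "S_eps \<epsilon> = tpi ` (U1 \<union> U2 \<epsilon>)"

end

theory Submission
  imports Defs
begin

text \<open>Lift \<open>\<theta>\<^sub>x, \<theta>\<^sub>y, \<theta>\<^sub>z\<close> to their representatives \<open>x, y, z \<in> U \<subseteq> [0,1)\<^sup>2\<close>. Then
  \<open>2y = x + z + k\<close> for an integer vector \<open>k\<close>, and summing coordinates gives
  \<open>2\<psi>(\<theta>\<^sub>y) = \<psi>(\<theta>\<^sub>x) + \<psi>(\<theta>\<^sub>z) + k\<^sub>1 + k\<^sub>2\<close>. If \<open>k\<^sub>1 + k\<^sub>2 = 0\<close> this is the second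
  alternative, if \<open>k\<^sub>1 + k\<^sub>2 \<ge> 1\<close> the first. The shape of \<open>U\<close> rules out \<open>k\<^sub>1 + k\<^sub>2 < 0\<close>:
  since \<open>\<psi> \<ge> 1/2\<close> on \<open>U\<close>, a negative carry forces \<open>x, z\<close> into \<open>U\<^sub>2\<close>, hence
  \<open>x\<^sub>1, z\<^sub>1 < 1/2\<close>, so \<open>k = (0,-1)\<close>; but then \<open>y\<^sub>1 < 1/2\<close> and \<open>\<psi>(\<theta>\<^sub>y) < 3/4\<close> put \<open>y\<close> in
  the upper-left block of \<open>U\<^sub>1\<close>, where \<open>2y\<^sub>2 \<ge> 1 > x\<^sub>2 + z\<^sub>2 - 1\<close>.\<close>

lemma tpi_eq_Abs_torus: "u \<in> unit_sq \<Longrightarrow> tpi u = Abs_torus u"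
  by (cases u) (auto simp: tpi_def unit_sq_def frac_eq)

lemma tpi_inv_tpi:
  assumes "u \<in> unit_sq"
  shows "tpi_inv (tpi u) = u"
  unfolding tpi_inv_def
proof (rule the_equality)
  show "u \<in> unit_sq \<and> tpi u = tpi u" using assms by simp
next
  fix v assume "v \<in> unit_sq \<and> tpi v = tpi u"
  then show "v = u" using assms by (metis tpi_eq_Abs_torus Abs_torus_inject)
qed

lemma tpi_eqE:
  assumes "tpi a = tpi b"
  obtains k1 k2 :: int where "fst a = fst b + k1" "snd a = snd b + k2"
proof -
  have "(frac (fst a), frac (snd a)) \<in> unit_sq" "(frac (fst b), frac (snd b)) \<in> unit_sq"
    by (simp_all add: unit_sq_def frac_lt_1)
  with assms have "frac (fst a) = frac (fst b)" "frac (snd a) = frac (snd b)"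
    by (simp_all add: tpi_def Abs_torus_inject)
  then show thesis by (metis frac_eqE that)
qed

lemma tpi_plus_tpi: "u \<in> unit_sq \<Longrightarrow> v \<in> unit_sq \<Longrightarrow> tpi u + tpi v = tpi (u + v)"
  by (simp add: plus_torus_def tpi_inv_tpi)

lemma psi_tpi: "u \<in> unit_sq \<Longrightarrow> psi (tpi u) = fst u + snd u"
  by (simp add: psi_def tpi_inv_tpi)

lemma U1_Un_U2_subset_unit_sq: "U1 \<union> U2 \<epsilon> \<subseteq> unit_sq"
  by (auto simp: U1_def U2_def unit_sq_def)

lemma S_epsE:
  assumes "\<theta> \<in> S_eps \<epsilon>"
  obtains a b where "(a, b) \<in> U1 \<union> U2 \<epsilon>" "\<theta> = tpi (a, b)"
  using assms unfolding S_eps_def by auto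

lemma sum_bounds_U1_Un_U2:
  assumes "0 \<le> \<epsilon>" "(a, b) \<in> U1 \<union> U2 \<epsilon>"
  shows "1/2 \<le> a + b" "a + b < 5/4"
  using assms by (auto simp: U1_def U2_def)

lemma fst_lt_half_if_sum_ge:
  assumes "(a, b) \<in> U1 \<union> U2 \<epsilon>" "3/4 \<le> a + b"
  shows "a < 1/2"
  using assms by (auto simp: U1_def U2_def)

lemma in_U1_if_sum_le:
  assumes "(a, b) \<in> U1 \<union> U2 \<epsilon>" "a + b \<le> 3/4 + \<epsilon>"
  shows "(a, b) \<in> U1"
  using assms by (auto simp: U2_def)

lemma midpoint_carry_nonneg:
  fixes x1 x2 y1 y2 z1 z2 :: real and k1 k2 :: int
  assumes "0 \<le> \<epsilon>"
    and x: "(x1, x2) \<in> U1 \<union> U2 \<epsilon>" and y: "(y1, y2) \<in> U1 \<union> U2 \<epsilon>"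
    and z: "(z1, z2) \<in> U1 \<union> U2 \<epsilon>"
    and k1: "2 * y1 = x1 + z1 + k1" and k2: "2 * y2 = x2 + z2 + k2"
  shows "0 \<le> k1 + k2"
proof (rule ccontr)
  assume "\<not> 0 \<le> k1 + k2"
  then have "real_of_int k1 + k2 \<le> -1" by linarith
  then have sum_y: "2 * y1 + 2 * y2 \<le> (x1 + x2) + (z1 + z2) - 1" using k1 k2 by linarith
  have unit: "0 \<le> y1" "0 \<le> y2" "x2 < 1" "z2 < 1"
    using x y z U1_Un_U2_subset_unit_sq[of \<epsilon>] by (auto simp: unit_sq_def)
  note bounds = sum_bounds_U1_Un_U2[OF \<open>0 \<le> \<epsilon>\<close>]
  have "3/4 \<le> x1 + x2" "3/4 \<le> z1 + z2"
    using sum_y bounds[OF x] bounds[OF y] bounds[OF z] by linarith+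
  then have "x1 < 1/2" "z1 < 1/2" using fst_lt_half_if_sum_ge x z by blast+
  then have "0 \<le> k1" "-1 \<le> k2" using k1 k2 unit by linarith+
  with \<open>real_of_int k1 + k2 \<le> -1\<close> have "k1 = 0" "k2 = -1" by linarith+
  have "y1 < 1/2" using k1 \<open>k1 = 0\<close> \<open>x1 < 1/2\<close> \<open>z1 < 1/2\<close> by simp
  moreover have "y1 + y2 \<le> 3/4 + \<epsilon>" using sum_y bounds[OF x] bounds[OF z] \<open>0 \<le> \<epsilon>\<close> by linarith
  then have "(y1, y2) \<in> U1" using in_U1_if_sum_le y by blast
  ultimately have "1/2 \<le> y2" by (simp add: U1_def)
  with k2 \<open>k2 = -1\<close> unit show False by simp
qed

theorem proposition4p6:
  fixes \<epsilon> :: real and \<theta>x \<theta>y \<theta>z :: torus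
  assumes "\<epsilon> > 0"
    and "\<theta>x \<in> S_eps \<epsilon>" and "\<theta>y \<in> S_eps \<epsilon>" and "\<theta>z \<in> S_eps \<epsilon>"
    and "\<theta>y + \<theta>y = \<theta>x + \<theta>z"
  defines "d \<equiv> (1/2) *\<^sub>R (tpi_inv \<theta>z - tpi_inv \<theta>x)"
  shows "2 * psi \<theta>y \<ge> psi \<theta>x + psi \<theta>z + 1/2
         \<or> psi \<theta>y = psi \<theta>x + (fst d + snd d)"
proof -
  obtain x1 x2 y1 y2 z1 z2 where
    x: "(x1, x2) \<in> U1 \<union> U2 \<epsilon>" "\<theta>x = tpi (x1, x2)" and
    y: "(y1, y2) \<in> U1 \<union> U2 \<epsilon>" "\<theta>y = tpi (y1, y2)" and
    z: "(z1, z2) \<in> U1 \<union> U2 \<epsilon>" "\<theta>z = tpi (z1, z2)"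
    using assms(2-4) by (metis S_epsE)
  have in_sq: "(x1, x2) \<in> unit_sq" "(y1, y2) \<in> unit_sq" "(z1, z2) \<in> unit_sq"
    using x(1) y(1) z(1) U1_Un_U2_subset_unit_sq by blast+
  have "tpi ((y1, y2) + (y1, y2)) = tpi ((x1, x2) + (z1, z2))"
    using assms(5) x y z in_sq by (simp add: tpi_plus_tpi)
  then obtain k1 k2 :: int where k: "2 * y1 = x1 + z1 + k1" "2 * y2 = x2 + z2 + k2"
    by (elim tpi_eqE) simp
  have psi: "2 * psi \<theta>y = psi \<theta>x + psi \<theta>z + (k1 + k2)"
    "psi \<theta>x + (fst d + snd d) = (psi \<theta>x + psi \<theta>z) / 2"
    using x y z in_sq k by (simp_all add: psi_tpi tpi_inv_tpi d_def field_simps)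
  have "0 \<le> k1 + k2" using midpoint_carry_nonneg[OF _ x(1) y(1) z(1) k] assms(1) by simp
  then consider "k1 + k2 = 0" | "1 \<le> k1 + k2" by linarith
  then show ?thesis
  proof cases
    case 1
    then show ?thesis using psi by simp
  next
    case 2
    then have "1 \<le> real_of_int (k1 + k2)" by simp
    then show ?thesis using psi by linarith
  qed
qed

end
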